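(* Let $|\text{-}|:\mathcal E\to\mathcal B$ be a concrete category over $\mathcal B$. Then the $\mathcal Q_{\mathcal B}$-category $\overline{\mathcal E}$ is tensored if and only if $\mathcal E$ is cofibred over $\mathcal B$ and, for all $X\in\mathrm{ob}\,\mathcal E$, $T\in\mathrm{ob}\,\mathcal B$ and every subset $\mathbf f\subseteq\mathcal B(|X|,T)$, there is $Y\in\mathrm{ob}\,\mathcal E$ with $|Y|=T$ and $$\overline{\mathcal E}(Y,Z)=\bigcap_{f\in\mathbf f}\overline{\mathcal E}(f\star X,Z)\quad\text{for all }Z\in\mathrm{ob}\,\mathcal E.$$
   Context: $\mathcal B$ is a category with small hom-sets; a concrete category over $\mathcal B$ is a category with a faithful functor $|\text{-}|:\mathcal E\to\mathcal B$; a map $f:|X|\to|Y|$ is an $\mathcal E$-morphism if it is $|f'|$ for some $f':X\to Y$. $\mathcal E$ is cofibred if for every $X\in\mathrm{ob}\,\mathcal E$ and every map $f:|X|\to T$ there is an object $f\star X$ with $|f\star X|=T$ such that a map $g:T\to|Z|$ is an $\mathcal E$-morphism $f\star X\to Z$ iff $g\circ f$ is an $\mathcal E$-morphism $X\to Z$. The free quantaloid $\mathcal Q_{\mathcal B}$ has the objects of $\mathcal B$, arrows $S\to T$ all subsets of $\mathcal B(S,T)$ ordered by inclusion, composition $\mathbf g\circ\mathbf f=\{g\circ f\mid f\in \mathbf f,g\in\mathbf g\}$; for $\mathbf f\subseteq\mathcal B(S,T)$, $\mathbf h\subseteq\mathcal B(S,U)$, $\mathbf h\swarrow\mathbf f=\{g\in\mathcal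 B(T,U)\mid\forall f\in\mathbf f: g\circ f\in\mathbf h\}$. $\overline{\mathcal E}$ is the $\mathcal Q_{\mathcal B}$-category with objects of $\mathcal E$, extents $|X|$, and $\overline{\mathcal E}(X,Y)$ the set of $\mathcal E$-morphisms $|X|\to|Y|$. $\overline{\mathcal E}$ is tensored if for all $X\in\mathrm{ob}\,\mathcal E$ and all $\mathbf u\subseteq\mathcal B(|X|,T)$ there is $Y$ with $|Y|=T$ and $\overline{\mathcal E}(Y,Z)=\overline{\mathcal E}(X,Z)\swarrow\mathbf u$ for all $Z$. *)

theory Defs
  imports Main
begin

text \<open>A category given by its object set, hom-sets, composition (Comp g f = g after f)
  and identities. Hom-sets are HOL sets, hence small.\<close>
record ('o, 'm) cat =
  Ob   :: "'o set"
  Hom  :: "'o \<Rightarrow> 'o \<Rightarrow> 'm set"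
  Comp :: "'m \<Rightarrow> 'm \<Rightarrow> 'm"
  Idm  :: "'o \<Rightarrow> 'm"

definition category :: "('o, 'm) cat \<Rightarrow> bool" where
  "category C \<longleftrightarrow>
     (\<forall>A\<in>Ob C. Idm C A \<in> Hom C A A) \<and>
     (\<forall>A\<in>Ob C. \<forall>B\<in>Ob C. \<forall>C'\<in>Ob C. \<forall>f g. f \<in> Hom C A B \<and> g \<in> Hom C B C'
         \<longrightarrow> Comp C g f \<in> Hom C A C') \<and>
     (\<forall>A\<in>Ob C. \<forall>B\<in>Ob C. \<forall>f\<in>Hom C A B.
         Comp C f (Idm C A) = f \<and> Comp C (Idm C B) f = f) \<and>
     (\<forall>A\<in>Ob C. \<forall>B\<in>Ob C. \<forall>C'\<in>Ob C. \<forall>D\<in>Ob C. \<forall>f g h.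
         f \<in> Hom C A B \<and> g \<in> Hom C B C' \<and> h \<in> Hom C C' D
         \<longrightarrow> Comp C h (Comp C g f) = Comp C (Comp C h g) f) \<and>
     (\<forall>A\<in>Ob C. \<forall>B\<in>Ob C. \<forall>A'\<in>Ob C. \<forall>B'\<in>Ob C. \<forall>f.
         f \<in> Hom C A B \<and> f \<in> Hom C A' B' \<longrightarrow> A = A' \<and> B = B')"

text \<open>A concrete category over B: a category E with a faithful functor
  |-| given on objects by ext and on morphisms by F.\<close>
definition concrete_category ::
  "('o, 'm) cat \<Rightarrow> ('e, 'f) cat \<Rightarrow> ('e \<Rightarrow> 'o) \<Rightarrow> ('f \<Rightarrow> 'm) \<Rightarrow> bool" where
  "concrete_category B E ext F \<longleftrightarrow>
     category B \<and> category E \<and>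
     (\<forall>X\<in>Ob E. ext X \<in> Ob B) \<and>
     (\<forall>X\<in>Ob E. \<forall>Y\<in>Ob E. \<forall>f\<in>Hom E X Y. F f \<in> Hom B (ext X) (ext Y)) \<and>
     (\<forall>X\<in>Ob E. F (Idm E X) = Idm B (ext X)) \<and>
     (\<forall>X\<in>Ob E. \<forall>Y\<in>Ob E. \<forall>Z\<in>Ob E. \<forall>f g. f \<in> Hom E X Y \<and> g \<in> Hom E Y Z
         \<longrightarrow> F (Comp E g f) = Comp B (F g) (F f)) \<and>
     (\<forall>X\<in>Ob E. \<forall>Y\<in>Ob E. \<forall>f\<in>Hom E X Y. \<forall>f'\<in>Hom E X Y. F f = F f' \<longrightarrow> f = f')"

definition is_Emor :: "('e, 'f) cat \<Rightarrow> ('f \<Rightarrow> 'm) \<Rightarrow> 'e \<Rightarrow> 'e \<Rightarrow> 'm \<Rightarrow> bool" where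
  "is_Emor E F X Y g \<longleftrightarrow> (\<exists>f'\<in>Hom E X Y. F f' = g)"

definition Ebar :: "('o, 'm) cat \<Rightarrow> ('e, 'f) cat \<Rightarrow> ('e \<Rightarrow> 'o) \<Rightarrow> ('f \<Rightarrow> 'm) \<Rightarrow> 'e \<Rightarrow> 'e \<Rightarrow> 'm set" where
  "Ebar B E ext F X Y = {g \<in> Hom B (ext X) (ext Y). is_Emor E F X Y g}"

text \<open>Left implication in the free quantaloid Q_B: for f \<subseteq> B(S,T), h \<subseteq> B(S,U),
  h \<swarrow> f = {g \<in> B(T,U). \<forall>f\<in>f. g \<circ> f \<in> h}.\<close>
definition lift_impl :: "('o, 'm) cat \<Rightarrow> 'o \<Rightarrow> 'o \<Rightarrow> 'm set \<Rightarrow> 'm set \<Rightarrow> 'm set" where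
  "lift_impl B T U h fs = {g \<in> Hom B T U. \<forall>f\<in>fs. Comp B g f \<in> h}"

definition is_cofib_obj ::
  "('o, 'm) cat \<Rightarrow> ('e, 'f) cat \<Rightarrow> ('e \<Rightarrow> 'o) \<Rightarrow> ('f \<Rightarrow> 'm) \<Rightarrow> 'e \<Rightarrow> 'o \<Rightarrow> 'm \<Rightarrow> 'e \<Rightarrow> bool" where
  "is_cofib_obj B E ext F X T f Y \<longleftrightarrow>
     Y \<in> Ob E \<and> ext Y = T \<and>
     (\<forall>Z\<in>Ob E. \<forall>g\<in>Hom B T (ext Z).
        is_Emor E F Y Z g \<longleftrightarrow> is_Emor E F X Z (Comp B g f))"

definition cofibred ::
  "('o, 'm) cat \<Rightarrow> ('e, 'f) cat \<Rightarrow> ('e \<Rightarrow> 'o) \<Rightarrow> ('f \<Rightarrow> 'm) \<Rightarrow> bool" where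
  "cofibred B E ext F \<longleftrightarrow>
     (\<forall>X\<in>Ob E. \<forall>T\<in>Ob B. \<forall>f\<in>Hom B (ext X) T. \<exists>Y. is_cofib_obj B E ext F X T f Y)"

text \<open>The chosen object f \<star> X (well defined up to the defining property when E is cofibred).\<close>
definition star ::
  "('o, 'm) cat \<Rightarrow> ('e, 'f) cat \<Rightarrow> ('e \<Rightarrow> 'o) \<Rightarrow> ('f \<Rightarrow> 'm) \<Rightarrow> 'm \<Rightarrow> 'o \<Rightarrow> 'e \<Rightarrow> 'e" where
  "star B E ext F f T X = (SOME Y. is_cofib_obj B E ext F X T f Y)"

definition tensored ::
  "('o, 'm) cat \<Rightarrow> ('e, 'f) cat \<Rightarrow> ('e \<Rightarrow> 'o) \<Rightarrow> ('f \<Rightarrow> 'm) \<Rightarrow> bool" where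
  "tensored B E ext F \<longleftrightarrow>
     (\<forall>X\<in>Ob E. \<forall>T\<in>Ob B. \<forall>u. u \<subseteq> Hom B (ext X) T \<longrightarrow>
        (\<exists>Y\<in>Ob E. ext Y = T \<and>
           (\<forall>Z\<in>Ob E. Ebar B E ext F Y Z = lift_impl B T (ext Z) (Ebar B E ext F X Z) u)))"

end

theory Submission
  imports Defs
begin

text \<open>The object \<open>f \<star> X\<close> is precisely a tensor of \<open>X\<close> with the singleton \<open>{f}\<close>,
  and left implication along a set of maps is the intersection of the left implications along
  its members. So tensors along arbitrary sets exist iff \<open>f \<star> X\<close> exists for every \<open>f\<close>
  and the intersections of the homs out of the \<open>f \<star> X\<close> are representable.\<close>

lemma category_Comp_in_Hom:
  assumes "category B" "A \<in> Ob B" "T \<in> Ob B" "C \<in> Ob B" "f \<in> Hom B A T" "g \<in> Hom B T C"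
  shows "Comp B g f \<in> Hom B A C"
  using assms unfolding category_def by blast

lemma lift_impl_eq_Inter_singletons:
  "lift_impl B T U h fs = Hom B T U \<inter> (\<Inter>f\<in>fs. lift_impl B T U h {f})"
  unfolding lift_impl_def by auto

lemma Ebar_eq_lift_impl_singleton_iff:
  assumes cc: "concrete_category B E ext F"
    and X: "X \<in> Ob E" and T: "T \<in> Ob B" and f: "f \<in> Hom B (ext X) T"
    and Z: "Z \<in> Ob E" and Y: "ext Y = T"
  shows "Ebar B E ext F Y Z = lift_impl B T (ext Z) (Ebar B E ext F X Z) {f} \<longleftrightarrow>
    (\<forall>g\<in>Hom B T (ext Z). is_Emor E F Y Z g \<longleftrightarrow> is_Emor E F X Z (Comp B g f))"
proof -
  have B: "category B" "ext X \<in> Ob B" "ext Z \<in> Ob B"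
    using cc X Z unfolding concrete_category_def by auto
  have "Comp B g f \<in> Hom B (ext X) (ext Z)" if "g \<in> Hom B T (ext Z)" for g
    using category_Comp_in_Hom[OF B(1,2) T B(3) f that] .
  then have "lift_impl B T (ext Z) (Ebar B E ext F X Z) {f} =
      {g \<in> Hom B T (ext Z). is_Emor E F X Z (Comp B g f)}"
    unfolding lift_impl_def Ebar_def by blast
  moreover have "Ebar B E ext F Y Z = {g \<in> Hom B T (ext Z). is_Emor E F Y Z g}"
    unfolding Ebar_def Y ..
  ultimately show ?thesis by blast
qed

lemma is_cofib_obj_iff_singleton_tensor:
  assumes "concrete_category B E ext F"
    and "X \<in> Ob E" "T \<in> Ob B" "f \<in> Hom B (ext X) T"
  shows "is_cofib_obj B E ext F X T f Y \<longleftrightarrow> Y \<in> Ob E \<and> ext Y = T \<and>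
    (\<forall>Z\<in>Ob E. Ebar B E ext F Y Z = lift_impl B T (ext Z) (Ebar B E ext F X Z) {f})"
  using Ebar_eq_lift_impl_singleton_iff[OF assms] unfolding is_cofib_obj_def by blast

lemma Ebar_star:
  assumes cc: "concrete_category B E ext F" and "cofibred B E ext F"
    and X: "X \<in> Ob E" and T: "T \<in> Ob B" and f: "f \<in> Hom B (ext X) T" and "Z \<in> Ob E"
  shows "Ebar B E ext F (star B E ext F f T X) Z = lift_impl B T (ext Z) (Ebar B E ext F X Z) {f}"
proof -
  have "is_cofib_obj B E ext F X T f (star B E ext F f T X)"
    using assms unfolding cofibred_def star_def by (meson someI_ex)
  then show ?thesis
    using is_cofib_obj_iff_singleton_tensor[OF cc X T f] \<open>Z \<in> Ob E\<close> by blast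
qed

lemma lift_impl_Ebar_eq_Inter_star:
  assumes "concrete_category B E ext F" and "cofibred B E ext F"
    and "X \<in> Ob E" "T \<in> Ob B" "fs \<subseteq> Hom B (ext X) T" "Z \<in> Ob E"
  shows "lift_impl B T (ext Z) (Ebar B E ext F X Z) fs =
    Hom B T (ext Z) \<inter> (\<Inter>f\<in>fs. Ebar B E ext F (star B E ext F f T X) Z)"
  using Ebar_star[OF assms(1-4) _ assms(6)] assms(5)
  by (subst lift_impl_eq_Inter_singletons) auto

lemma tensored_imp_cofibred:
  assumes cc: "concrete_category B E ext F" and "tensored B E ext F"
  shows "cofibred B E ext F"
  unfolding cofibred_def
proof (intro ballI)
  fix X T f assume X: "X \<in> Ob E" and T: "T \<in> Ob B" and f: "f \<in> Hom B (ext X) T"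
  then obtain Y where "Y \<in> Ob E" "ext Y = T"
      "\<forall>Z\<in>Ob E. Ebar B E ext F Y Z = lift_impl B T (ext Z) (Ebar B E ext F X Z) {f}"
    using \<open>tensored B E ext F\<close> unfolding tensored_def by (meson empty_subsetI insert_subset)
  then show "\<exists>Y. is_cofib_obj B E ext F X T f Y"
    using is_cofib_obj_iff_singleton_tensor[OF cc X T f] by blast
qed

theorem proposition4p3:
  fixes B :: "('o, 'm) cat" and E :: "('e, 'f) cat"
    and ext :: "'e \<Rightarrow> 'o" and F :: "'f \<Rightarrow> 'm"
  assumes "concrete_category B E ext F"
  shows "tensored B E ext F \<longleftrightarrow>
    (cofibred B E ext F \<and>
     (\<forall>X\<in>Ob E. \<forall>T\<in>Ob B. \<forall>fs. fs \<subseteq> Hom B (ext X) T \<longrightarrow>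
        (\<exists>Y\<in>Ob E. ext Y = T \<and>
           (\<forall>Z\<in>Ob E. Ebar B E ext F Y Z =
              Hom B T (ext Z) \<inter> (\<Inter>f\<in>fs. Ebar B E ext F (star B E ext F f T X) Z)))))"
proof -
  have "tensored B E ext F \<longleftrightarrow>
    (\<forall>X\<in>Ob E. \<forall>T\<in>Ob B. \<forall>fs. fs \<subseteq> Hom B (ext X) T \<longrightarrow>
        (\<exists>Y\<in>Ob E. ext Y = T \<and>
           (\<forall>Z\<in>Ob E. Ebar B E ext F Y Z =
              Hom B T (ext Z) \<inter> (\<Inter>f\<in>fs. Ebar B E ext F (star B E ext F f T X) Z))))"
    if "cofibred B E ext F"
    unfolding tensored_def
    by (intro ball_cong refl all_cong imp_cong bex_cong conj_cong)
      (simp add: lift_impl_Ebar_eq_Inter_star[OF assms that])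
  then show ?thesis
    using tensored_imp_cofibred[OF assms] by blast
qed

end
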